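(* Let $a,x,y\in(0,1)$ with $ay<x$, and let $W_{(\alpha,\beta)}(a,x,y)=(T_1,T_2)$ be the 2-variable weighted shift defined below. Then the operator matrix $L=\begin{pmatrix} T_1^*T_1 & T_2^*T_1\\ T_1^*T_2 & T_2^*T_2\end{pmatrix}$ is positive.
   Context: A 2-variable weighted shift $(T_1,T_2)$ on $\ell^2(\mathbb{Z}_+^2)$ (orthonormal basis $\{e_{\mathbf{k}}\}$) is given by $T_1e_{\mathbf{k}}=\alpha_{\mathbf{k}}e_{\mathbf{k}+(1,0)}$, $T_2e_{\mathbf{k}}=\beta_{\mathbf{k}}e_{\mathbf{k}+(0,1)}$. $W_{(\alpha,\beta)}(a,x,y)$ is the one with $\alpha_{(0,0)}=x$, $\alpha_{(0,k_2)}=a$ for $k_2\ge1$, $\alpha_{(k_1,k_2)}=1$ for $k_1\ge1$; $\beta_{(0,0)}=y$, $\beta_{(k_1,0)}=ay/x$ for $k_1\ge1$, $\beta_{(k_1,k_2)}=1$ for $k_2\ge1$. $L$ acts on $\ell^2(\mathbb{Z}_+^2)\oplus\ell^2(\mathbb{Z}_+^2)$. *)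

theory Defs
  imports "HOL-Analysis.Analysis"
begin

text \<open>Vectors of \<open>\<ell>\<^sup>2(\<int>\<^sub>+\<^sup>2)\<close> are represented as functions
  \<open>nat \<times> nat \<Rightarrow> complex\<close>; \<open>f\<close> corresponds to \<open>\<Sum> f k e_k\<close>.\<close>

definition is_l2 :: "(nat \<times> nat \<Rightarrow> complex) \<Rightarrow> bool" where
  "is_l2 f \<longleftrightarrow> (\<lambda>k. (cmod (f k))\<^sup>2) summable_on UNIV"

definition l2_inner :: "(nat \<times> nat \<Rightarrow> complex) \<Rightarrow> (nat \<times> nat \<Rightarrow> complex) \<Rightarrow> complex" where
  "l2_inner u v = (\<Sum>\<^sub>\<infinity>k. u k * cnj (v k))"

fun wa :: "real \<Rightarrow> real \<Rightarrow> real \<Rightarrow> nat \<times> nat \<Rightarrow> real" where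
  "wa a x y (k1, k2) =
     (if k1 = 0 then (if k2 = 0 then x else a) else 1)"

fun wb :: "real \<Rightarrow> real \<Rightarrow> real \<Rightarrow> nat \<times> nat \<Rightarrow> real" where
  "wb a x y (k1, k2) =
     (if k2 = 0 then (if k1 = 0 then y else a * y / x) else 1)"

text \<open>Weighted shift \<open>T e_k = w_k e_(k+\<delta>)\<close> in direction \<open>\<delta>\<close> and its adjoint
  \<open>T\<^sup>* e_(k+\<delta>) = conj(w_k) e_k\<close>, \<open>T\<^sup>* e_k = 0\<close> otherwise.\<close>

fun T1 :: "real \<Rightarrow> real \<Rightarrow> real \<Rightarrow> (nat \<times> nat \<Rightarrow> complex) \<Rightarrow> nat \<times> nat \<Rightarrow> complex" where
  "T1 a x y f (k1, k2) =
     (if k1 = 0 then 0 else complex_of_real (wa a x y (k1 - 1, k2)) * f (k1 - 1, k2))"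

fun T2 :: "real \<Rightarrow> real \<Rightarrow> real \<Rightarrow> (nat \<times> nat \<Rightarrow> complex) \<Rightarrow> nat \<times> nat \<Rightarrow> complex" where
  "T2 a x y f (k1, k2) =
     (if k2 = 0 then 0 else complex_of_real (wb a x y (k1, k2 - 1)) * f (k1, k2 - 1))"

fun T1adj :: "real \<Rightarrow> real \<Rightarrow> real \<Rightarrow> (nat \<times> nat \<Rightarrow> complex) \<Rightarrow> nat \<times> nat \<Rightarrow> complex" where
  "T1adj a x y f (k1, k2) = cnj (complex_of_real (wa a x y (k1, k2))) * f (k1 + 1, k2)"

fun T2adj :: "real \<Rightarrow> real \<Rightarrow> real \<Rightarrow> (nat \<times> nat \<Rightarrow> complex) \<Rightarrow> nat \<times> nat \<Rightarrow> complex" where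
  "T2adj a x y f (k1, k2) = cnj (complex_of_real (wb a x y (k1, k2))) * f (k1, k2 + 1)"

definition Lop :: "real \<Rightarrow> real \<Rightarrow> real \<Rightarrow>
    (nat \<times> nat \<Rightarrow> complex) \<times> (nat \<times> nat \<Rightarrow> complex) \<Rightarrow>
    (nat \<times> nat \<Rightarrow> complex) \<times> (nat \<times> nat \<Rightarrow> complex)" where
  "Lop a x y h =
     (let f = fst h; g = snd h in
      (\<lambda>k. T1adj a x y (T1 a x y f) k + T2adj a x y (T1 a x y g) k,
       \<lambda>k. T1adj a x y (T2 a x y f) k + T2adj a x y (T2 a x y g) k))"

definition L_positive :: "real \<Rightarrow> real \<Rightarrow> real \<Rightarrow> bool" where
  "L_positive a x y \<longleftrightarrow>
     (\<forall>f g. is_l2 f \<and> is_l2 g \<longrightarrow>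
        (let z = l2_inner (fst (Lop a x y (f, g))) f + l2_inner (snd (Lop a x y (f, g))) g
         in Im z = 0 \<and> Re z \<ge> 0))"

end

theory Submission
  imports Defs
begin

text \<open>Writing \<open>h = (f, g)\<close>, the form is
  \<open>\<langle>L h, h\<rangle> = \<parallel>T\<^sub>1 f\<parallel>\<^sup>2 + \<parallel>T\<^sub>2 g\<parallel>\<^sup>2 + 2 Re \<langle>T\<^sub>1 g, T\<^sub>2 f\<rangle>\<close>.
  The cross term pairs \<open>g(m, n+1)\<close> with \<open>f(m+1, n)\<close> with weight
  \<open>\<beta>(m+1, n) \<alpha>(m, n+1)\<close>, which is one of \<open>1, a, ay/x, a\<^sup>2y/x\<close>
  and hence at most \<open>1\<close> in modulus when \<open>a \<le> 1\<close> and \<open>ay \<le> x\<close>.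
  By \<open>2|uv| \<le> |u|\<^sup>2 + |v|\<^sup>2\<close> the cross term is then bounded by the squared norms of
  \<open>f\<close> off the first column and of \<open>g\<close> off the first row, and these are dominated by
  \<open>\<parallel>T\<^sub>1 f\<parallel>\<^sup>2\<close> and \<open>\<parallel>T\<^sub>2 g\<parallel>\<^sup>2\<close> because \<open>\<alpha> = 1\<close> off the first column and
  \<open>\<beta> = 1\<close> off the first row.\<close>

lemma has_sum_reindex_vanishing:
  fixes h :: "'a \<Rightarrow> 'b" and f :: "'b \<Rightarrow> 'c::{comm_monoid_add,topological_space}"
  assumes "inj h" and "\<And>k. k \<notin> range h \<Longrightarrow> f k = 0" and "((f \<circ> h) has_sum s) UNIV"
  shows "(f has_sum s) UNIV"
proof -
  have "(f has_sum s) (range h)"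
    using has_sum_reindex[of h UNIV f s] assms(1,3) by simp
  then show ?thesis
    by (subst has_sum_cong_neutral[where T = "range h"]) (use assms(2) in auto)
qed

lemma infsum_comp_inj_le:
  fixes f :: "'b \<Rightarrow> real"
  assumes "inj h" and "f summable_on UNIV" and "\<And>k. 0 \<le> f k"
  shows "(\<Sum>\<^sub>\<infinity>k. f (h k)) \<le> (\<Sum>\<^sub>\<infinity>k. f k)"
proof -
  have "(\<Sum>\<^sub>\<infinity>k. f (h k)) = infsum f (range h)"
    using infsum_reindex[of h UNIV f] assms(1) by (simp add: o_def)
  also have "\<dots> \<le> (\<Sum>\<^sub>\<infinity>k. f k)"
    by (rule infsum_mono_neutral) (use assms summable_on_subset[OF assms(2)] in auto)
  finally show ?thesis .
qed

lemma is_l2_comp_inj: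
  assumes "is_l2 f" and "inj h"
  shows "is_l2 (f \<circ> h)"
  using assms summable_on_reindex[of h UNIV "\<lambda>k. (cmod (f k))\<^sup>2"] summable_on_subset
  unfolding is_l2_def by (auto simp: o_def)

lemma summable_on_weighted_norm_sq:
  fixes f :: "'a \<Rightarrow> complex" and c :: "'a \<Rightarrow> real"
  assumes "(\<lambda>k. (cmod (f k))\<^sup>2) summable_on A" and "\<And>k. \<bar>c k\<bar> \<le> C"
  shows "(\<lambda>k. (c k)\<^sup>2 * (cmod (f k))\<^sup>2) summable_on A"
proof (rule summable_on_comparison_test)
  show "(\<lambda>k. C\<^sup>2 * (cmod (f k))\<^sup>2) summable_on A"
    using assms(1) by (rule summable_on_cmult_right)
  show "(c k)\<^sup>2 * (cmod (f k))\<^sup>2 \<le> C\<^sup>2 * (cmod (f k))\<^sup>2" for k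
  proof (rule mult_right_mono)
    show "(c k)\<^sup>2 \<le> C\<^sup>2"
      using assms(2)[of k] power_mono[of "\<bar>c k\<bar>" C 2] by simp
  qed simp
qed simp

lemma has_sum_weighted_norm_sq:
  fixes f :: "'a \<Rightarrow> complex" and c :: "'a \<Rightarrow> real"
  assumes "(\<lambda>k. (cmod (f k))\<^sup>2) summable_on A" and "\<And>k. \<bar>c k\<bar> \<le> C"
  shows "((\<lambda>k. of_real ((c k)\<^sup>2) * f k * cnj (f k))
           has_sum of_real (\<Sum>\<^sub>\<infinity>k\<in>A. (c k)\<^sup>2 * (cmod (f k))\<^sup>2)) A"
proof -
  have weighted: "(\<lambda>k. of_real ((c k)\<^sup>2 * (cmod (f k))\<^sup>2) :: complex)
      = (\<lambda>k. of_real ((c k)\<^sup>2) * f k * cnj (f k))"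
    by (simp only: of_real_mult complex_norm_square mult.assoc)
  show ?thesis
    unfolding weighted[symmetric]
    using summable_on_weighted_norm_sq[OF assms] by (intro has_sum_of_real has_sum_infsum)
qed

lemma cmod_cross_le:
  fixes u v w :: complex
  assumes "cmod w \<le> C"
  shows "2 * cmod (w * v * cnj u) \<le> C * ((cmod u)\<^sup>2 + (cmod v)\<^sup>2)"
proof -
  have "2 * cmod (w * v * cnj u) \<le> C * (2 * cmod v * cmod u)"
    using assms by (simp add: norm_mult mult.assoc mult_right_mono)
  also have "\<dots> \<le> C * ((cmod u)\<^sup>2 + (cmod v)\<^sup>2)"
    using assms sum_squares_bound[of "cmod v" "cmod u"]
    by (intro mult_left_mono) (auto intro: order_trans[OF norm_ge_zero])
  finally show ?thesis .
qed

lemma summable_on_cross: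
  fixes u v w :: "'a \<Rightarrow> complex"
  assumes u: "(\<lambda>k. (cmod (u k))\<^sup>2) summable_on A"
    and v: "(\<lambda>k. (cmod (v k))\<^sup>2) summable_on A"
    and w: "\<And>k. cmod (w k) \<le> C"
  shows "(\<lambda>k. w k * v k * cnj (u k)) summable_on A"
proof -
  have "(\<lambda>k. cmod (w k * v k * cnj (u k))) summable_on A"
  proof (rule summable_on_comparison_test)
    show "(\<lambda>k. C * ((cmod (u k))\<^sup>2 + (cmod (v k))\<^sup>2)) summable_on A"
      using summable_on_cmult_right[OF summable_on_add[OF u v]] .
    show "cmod (w k * v k * cnj (u k)) \<le> C * ((cmod (u k))\<^sup>2 + (cmod (v k))\<^sup>2)" for k
      using cmod_cross_le[OF w[of k], where v = "v k" and u = "u k"]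
        norm_ge_zero[of "w k * v k * cnj (u k)"]
      by linarith
  qed simp
  then show ?thesis
    using summable_on_iff_abs_summable_on_complex by blast
qed

lemma Re_infsum_cross_ge:
  fixes u v w :: "'a \<Rightarrow> complex"
  assumes u: "(\<lambda>k. (cmod (u k))\<^sup>2) summable_on A"
    and v: "(\<lambda>k. (cmod (v k))\<^sup>2) summable_on A"
    and w: "\<And>k. cmod (w k) \<le> 1"
  shows "- ((\<Sum>\<^sub>\<infinity>k\<in>A. (cmod (u k))\<^sup>2) + (\<Sum>\<^sub>\<infinity>k\<in>A. (cmod (v k))\<^sup>2))
           \<le> 2 * Re (\<Sum>\<^sub>\<infinity>k\<in>A. w k * v k * cnj (u k))"
proof -
  define P where "P k = w k * v k * cnj (u k)" for k
  have P: "P summable_on A"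
    unfolding P_def using summable_on_cross[OF u v w] .
  have "0 \<le> (\<Sum>\<^sub>\<infinity>k\<in>A. (cmod (u k))\<^sup>2 + (cmod (v k))\<^sup>2 + 2 * Re (P k))"
  proof (rule infsum_nonneg)
    show "0 \<le> (cmod (u k))\<^sup>2 + (cmod (v k))\<^sup>2 + 2 * Re (P k)" for k
      using cmod_cross_le[OF w[of k], where v = "v k" and u = "u k"] abs_Re_le_cmod[of "P k"]
      unfolding P_def by (simp add: abs_le_iff)
  qed
  also have "\<dots> = (\<Sum>\<^sub>\<infinity>k\<in>A. (cmod (u k))\<^sup>2) + (\<Sum>\<^sub>\<infinity>k\<in>A. (cmod (v k))\<^sup>2)
                   + 2 * Re (\<Sum>\<^sub>\<infinity>k\<in>A. P k)"
    using u v summable_on_Re[OF P]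
    by (simp add: infsum_add summable_on_add summable_on_cmult_right infsum_cmult_right
        infsum_Re[OF P])
  finally show ?thesis
    unfolding P_def by linarith
qed

definition shift1 :: "nat \<times> nat \<Rightarrow> nat \<times> nat" where
  "shift1 k = (Suc (fst k), snd k)"

definition shift2 :: "nat \<times> nat \<Rightarrow> nat \<times> nat" where
  "shift2 k = (fst k, Suc (snd k))"

lemma inj_shift1: "inj shift1"
  by (auto simp: inj_def shift1_def prod_eq_iff)

lemma inj_shift2: "inj shift2"
  by (auto simp: inj_def shift2_def prod_eq_iff)

lemma range_shift1: "range shift1 = {k. fst k \<noteq> 0}"
  by (auto simp: shift1_def image_iff gr0_conv_Suc intro: exI[of _ "(_, _)"])

lemma range_shift2: "range shift2 = {k. snd k \<noteq> 0}"
  by (auto simp: shift2_def image_iff gr0_conv_Suc intro: exI[of _ "(_, _)"])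

lemma wa_shift1 [simp]: "wa a x y (shift1 k) = 1"
  by (simp add: shift1_def)

lemma wb_shift2 [simp]: "wb a x y (shift2 k) = 1"
  by (simp add: shift2_def)

definition cross_weight :: "real \<Rightarrow> real \<Rightarrow> real \<Rightarrow> nat \<times> nat \<Rightarrow> real" where
  "cross_weight a x y k = wb a x y (shift1 k) * wa a x y (shift2 k)"

lemma abs_wa_le: "\<bar>wa a x y k\<bar> \<le> \<bar>x\<bar> + \<bar>a\<bar> + 1"
  by (cases k) auto

lemma abs_wb_le: "\<bar>wb a x y k\<bar> \<le> \<bar>y\<bar> + \<bar>a * y / x\<bar> + 1"
  by (cases k) auto

lemma abs_cross_weight_le:
  "\<bar>cross_weight a x y k\<bar> \<le> (\<bar>y\<bar> + \<bar>a * y / x\<bar> + 1) * (\<bar>x\<bar> + \<bar>a\<bar> + 1)"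
  unfolding cross_weight_def abs_mult by (intro mult_mono abs_wa_le abs_wb_le) auto

lemma abs_cross_weight_le_1:
  assumes "\<bar>a\<bar> \<le> 1" and "\<bar>a * y / x\<bar> \<le> 1"
  shows "\<bar>cross_weight a x y k\<bar> \<le> 1"
  using assms by (cases k) (auto simp: cross_weight_def shift1_def shift2_def abs_mult mult_le_one)

lemma T1adj_T1: "T1adj a x y (T1 a x y f) k = of_real ((wa a x y k)\<^sup>2) * f k"
  by (cases k) (simp add: power2_eq_square del: wa.simps)

lemma T2adj_T2: "T2adj a x y (T2 a x y f) k = of_real ((wb a x y k)\<^sup>2) * f k"
  by (cases k) (simp add: power2_eq_square del: wb.simps)

lemma T2adj_T1_shift1:
  "T2adj a x y (T1 a x y g) (shift1 k) = of_real (cross_weight a x y k) * g (shift2 k)"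
  by (simp add: cross_weight_def shift1_def shift2_def del: wa.simps wb.simps)

lemma T1adj_T2_shift2:
  "T1adj a x y (T2 a x y f) (shift2 k) = of_real (cross_weight a x y k) * f (shift1 k)"
  by (simp add: cross_weight_def shift1_def shift2_def mult.commute del: wa.simps wb.simps)

lemma T2adj_T1_outside: "k \<notin> range shift1 \<Longrightarrow> T2adj a x y (T1 a x y g) k = 0"
  by (cases k) (simp add: range_shift1)

lemma T1adj_T2_outside: "k \<notin> range shift2 \<Longrightarrow> T1adj a x y (T2 a x y f) k = 0"
  by (cases k) (simp add: range_shift2)

lemma summable_on_norm_sq_shift:
  assumes "is_l2 f"
  shows "(\<lambda>k. (cmod (f (shift1 k)))\<^sup>2) summable_on UNIV"
    and "(\<lambda>k. (cmod (f (shift2 k)))\<^sup>2) summable_on UNIV"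
  using is_l2_comp_inj[OF assms inj_shift1] is_l2_comp_inj[OF assms inj_shift2]
  by (simp_all add: is_l2_def)

definition cross_term :: "real \<Rightarrow> real \<Rightarrow> real \<Rightarrow>
    (nat \<times> nat \<Rightarrow> complex) \<Rightarrow> (nat \<times> nat \<Rightarrow> complex) \<Rightarrow> complex" where
  "cross_term a x y f g =
     (\<Sum>\<^sub>\<infinity>k. of_real (cross_weight a x y k) * g (shift2 k) * cnj (f (shift1 k)))"

lemma has_sum_cross_term:
  assumes "is_l2 f" and "is_l2 g"
  shows "((\<lambda>k. of_real (cross_weight a x y k) * g (shift2 k) * cnj (f (shift1 k)))
           has_sum cross_term a x y f g) UNIV"
proof -
  have "(\<lambda>k. of_real (cross_weight a x y k) * g (shift2 k) * cnj (f (shift1 k))) summable_on UNIV"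
    by (rule summable_on_cross[OF summable_on_norm_sq_shift(1)[OF assms(1)]
          summable_on_norm_sq_shift(2)[OF assms(2)]])
      (simp only: norm_of_real, rule abs_cross_weight_le)
  then show ?thesis
    unfolding cross_term_def by (rule has_sum_infsum)
qed

lemma l2_inner_Lop_fst:
  assumes "is_l2 f" and "is_l2 g"
  shows "l2_inner (fst (Lop a x y (f, g))) f
       = of_real (\<Sum>\<^sub>\<infinity>k. (wa a x y k)\<^sup>2 * (cmod (f k))\<^sup>2) + cross_term a x y f g"
proof -
  have diagonal: "((\<lambda>k. T1adj a x y (T1 a x y f) k * cnj (f k))
                     has_sum of_real (\<Sum>\<^sub>\<infinity>k. (wa a x y k)\<^sup>2 * (cmod (f k))\<^sup>2)) UNIV"
    using has_sum_weighted_norm_sq[OF assms(1)[unfolded is_l2_def] abs_wa_le] by (simp add: T1adj_T1)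
  have off_diagonal: "((\<lambda>k. T2adj a x y (T1 a x y g) k * cnj (f k)) has_sum cross_term a x y f g) UNIV"
  proof (rule has_sum_reindex_vanishing[OF inj_shift1])
    show "T2adj a x y (T1 a x y g) k * cnj (f k) = 0" if "k \<notin> range shift1" for k
      using T2adj_T1_outside[OF that] by simp
    show "(((\<lambda>k. T2adj a x y (T1 a x y g) k * cnj (f k)) \<circ> shift1) has_sum cross_term a x y f g) UNIV"
      unfolding comp_def T2adj_T1_shift1 by (rule has_sum_cross_term[OF assms])
  qed
  have "((\<lambda>k. (T1adj a x y (T1 a x y f) k + T2adj a x y (T1 a x y g) k) * cnj (f k)) has_sum
      (of_real (\<Sum>\<^sub>\<infinity>k. (wa a x y k)\<^sup>2 * (cmod (f k))\<^sup>2) + cross_term a x y f g)) UNIV"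
    unfolding distrib_right by (rule has_sum_add[OF diagonal off_diagonal])
  then show ?thesis
    unfolding l2_inner_def Lop_def Let_def fst_conv snd_conv by (rule infsumI)
qed

lemma l2_inner_Lop_snd:
  assumes "is_l2 f" and "is_l2 g"
  shows "l2_inner (snd (Lop a x y (f, g))) g
       = cnj (cross_term a x y f g) + of_real (\<Sum>\<^sub>\<infinity>k. (wb a x y k)\<^sup>2 * (cmod (g k))\<^sup>2)"
proof -
  have off_diagonal: "((\<lambda>k. T1adj a x y (T2 a x y f) k * cnj (g k)) has_sum
      cnj (cross_term a x y f g)) UNIV"
  proof (rule has_sum_reindex_vanishing[OF inj_shift2])
    show "T1adj a x y (T2 a x y f) k * cnj (g k) = 0" if "k \<notin> range shift2" for k
      using T1adj_T2_outside[OF that] by simp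
    have "((\<lambda>k. cnj (of_real (cross_weight a x y k) * g (shift2 k) * cnj (f (shift1 k)))) has_sum
      cnj (cross_term a x y f g)) UNIV"
      unfolding has_sum_cnj_iff by (rule has_sum_cross_term[OF assms])
    then show "(((\<lambda>k. T1adj a x y (T2 a x y f) k * cnj (g k)) \<circ> shift2) has_sum
      cnj (cross_term a x y f g)) UNIV"
      unfolding comp_def T1adj_T2_shift2 by (simp only: complex_cnj_mult complex_cnj_complex_of_real
          complex_cnj_cnj mult_ac)
  qed
  have diagonal: "((\<lambda>k. T2adj a x y (T2 a x y g) k * cnj (g k))
                     has_sum of_real (\<Sum>\<^sub>\<infinity>k. (wb a x y k)\<^sup>2 * (cmod (g k))\<^sup>2)) UNIV"
    using has_sum_weighted_norm_sq[OF assms(2)[unfolded is_l2_def] abs_wb_le] by (simp add: T2adj_T2)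
  have "((\<lambda>k. (T1adj a x y (T2 a x y f) k + T2adj a x y (T2 a x y g) k) * cnj (g k)) has_sum
      (cnj (cross_term a x y f g) + of_real (\<Sum>\<^sub>\<infinity>k. (wb a x y k)\<^sup>2 * (cmod (g k))\<^sup>2))) UNIV"
    unfolding distrib_right by (rule has_sum_add[OF off_diagonal diagonal])
  then show ?thesis
    unfolding l2_inner_def Lop_def Let_def fst_conv snd_conv by (rule infsumI)
qed

lemma infsum_norm_sq_shift1_le:
  assumes "is_l2 f"
  shows "(\<Sum>\<^sub>\<infinity>k. (cmod (f (shift1 k)))\<^sup>2) \<le> (\<Sum>\<^sub>\<infinity>k. (wa a x y k)\<^sup>2 * (cmod (f k))\<^sup>2)"
proof -
  have "(\<Sum>\<^sub>\<infinity>k. (wa a x y (shift1 k))\<^sup>2 * (cmod (f (shift1 k)))\<^sup>2)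
      \<le> (\<Sum>\<^sub>\<infinity>k. (wa a x y k)\<^sup>2 * (cmod (f k))\<^sup>2)"
    by (rule infsum_comp_inj_le[OF inj_shift1
          summable_on_weighted_norm_sq[OF assms[unfolded is_l2_def] abs_wa_le]]) simp
  then show ?thesis by simp
qed

lemma infsum_norm_sq_shift2_le:
  assumes "is_l2 g"
  shows "(\<Sum>\<^sub>\<infinity>k. (cmod (g (shift2 k)))\<^sup>2) \<le> (\<Sum>\<^sub>\<infinity>k. (wb a x y k)\<^sup>2 * (cmod (g k))\<^sup>2)"
proof -
  have "(\<Sum>\<^sub>\<infinity>k. (wb a x y (shift2 k))\<^sup>2 * (cmod (g (shift2 k)))\<^sup>2)
      \<le> (\<Sum>\<^sub>\<infinity>k. (wb a x y k)\<^sup>2 * (cmod (g k))\<^sup>2)"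
    by (rule infsum_comp_inj_le[OF inj_shift2
          summable_on_weighted_norm_sq[OF assms[unfolded is_l2_def] abs_wb_le]]) simp
  then show ?thesis by simp
qed

lemma L_positive_if_bounded_weights:
  assumes "\<bar>a\<bar> \<le> 1" and "\<bar>a * y / x\<bar> \<le> 1"
  shows "L_positive a x y"
  unfolding L_positive_def Let_def
proof (intro allI impI)
  fix f g
  assume "is_l2 f \<and> is_l2 g"
  then have f: "is_l2 f" and g: "is_l2 g" by auto
  define Nf where "Nf = (\<Sum>\<^sub>\<infinity>k. (wa a x y k)\<^sup>2 * (cmod (f k))\<^sup>2)"
  define Ng where "Ng = (\<Sum>\<^sub>\<infinity>k. (wb a x y k)\<^sup>2 * (cmod (g k))\<^sup>2)"
  have form: "l2_inner (fst (Lop a x y (f, g))) f + l2_inner (snd (Lop a x y (f, g))) g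
      = of_real (Nf + Ng + 2 * Re (cross_term a x y f g))"
    unfolding l2_inner_Lop_fst[OF f g] l2_inner_Lop_snd[OF f g] cross_term_def Nf_def Ng_def
    by (simp add: complex_eq_iff)
  have weights: "\<And>k. cmod (of_real (cross_weight a x y k) :: complex) \<le> 1"
    using abs_cross_weight_le_1[OF assms] by simp
  have "0 \<le> Nf + Ng + 2 * Re (cross_term a x y f g)"
    using Re_infsum_cross_ge[where w = "\<lambda>k. of_real (cross_weight a x y k)",
        OF summable_on_norm_sq_shift(1)[OF f]
        summable_on_norm_sq_shift(2)[OF g] weights]
      infsum_norm_sq_shift1_le[OF f, of a x y] infsum_norm_sq_shift2_le[OF g, of a x y]
    unfolding cross_term_def Nf_def Ng_def by linarith
  then show "Im (l2_inner (fst (Lop a x y (f, g))) f + l2_inner (snd (Lop a x y (f, g))) g) = 0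
      \<and> 0 \<le> Re (l2_inner (fst (Lop a x y (f, g))) f + l2_inner (snd (Lop a x y (f, g))) g)"
    unfolding form by simp
qed

theorem lemma3p14:
  fixes a x y :: real
  assumes "0 < a" "a < 1" "0 < x" "x < 1" "0 < y" "y < 1" "a * y < x"
  shows "L_positive a x y"
  by (rule L_positive_if_bounded_weights) (use assms in \<open>auto simp: divide_le_eq\<close>)

end
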